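(* Let $\theta\le0$ be such that $F_\theta(t_1,t_2)=t_1^{\,1+\theta\log t_2}\,t_2$, $0<t_1,t_2<1$, is a bivariate distribution function. Let $X=(X_1,X_2)$ be a nonnegative bivariate random vector with absolutely continuous distribution function $F$ supported in $(0,1)^2$, finite $\overline\varepsilon^*_i(X;t_1,t_2)$ and bivariate EIT components $m_i^X(t_1,t_2)$. Then $$\overline\varepsilon^*_i(X;t_1,t_2)=\left(\frac{1+\theta\log t_j}{2+\theta\log t_j}\right)m_i^X(t_1,t_2),\qquad i,j\in\{1,2\},\ i\ne j,$$ holds for all $0<t_1,t_2<1$ if and only if $F=F_\theta$, i.e. $F(t_1,t_2)=t_1^{\,1+\theta\log t_2}\,t_2$ for $0<t_1,t_2<1$.
   Context: Let $F(x_1,x_2)=P(X_1\le x_1,X_2\le x_2)$. For $t_1,t_2>0$ with $F(t_1,t_2)>0$ define the conditional dynamic cumulative past entropies (CDCPE) $$\overline\varepsilon^*_1(X;t_1,t_2)=-\int_0^{t_1}\frac{F(x_1,t_2)}{F(t_1,t_2)}\log\frac{F(x_1,t_2)}{F(t_1,t_2)}dx_1,\qquad \overline\varepsilon^*_2(X;t_1,t_2)=-\int_0^{t_2}\frac{F(t_1,x_2)}{F(t_1,t_2)}\log\frac{F(t_1,x_2)}{F(t_1,t_2)}dx_2,$$ and the components of the bivariate expected inactivity time $m_1^X(t_1,t_2)=\frac{1}{F(t_1,t_2)}\int_0^{t_1}F(x_1,t_2)dx_1$, $m_2^X(t_1,t_2)=\frac{1}{F(t_1,t_2)}\int_0^{t_2}F(t_1,x_2)dx_2$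 (i.e. $m_i^X(t_1,t_2)=E(t_i-X_i\mid X_1<t_1,X_2<t_2)$). *)

theory Defs
  imports "HOL-Probability.Probability"
begin

definition abs_cont_df_unit_sq :: "(real \<Rightarrow> real \<Rightarrow> real) \<Rightarrow> bool" where
  "abs_cont_df_unit_sq F \<longleftrightarrow>
     (\<exists>f :: real \<times> real \<Rightarrow> real.
        (\<forall>z. 0 \<le> f z) \<and>
        (\<forall>z. z \<notin> {0<..<1} \<times> {0<..<1} \<longrightarrow> f z = 0) \<and>
        (f has_integral 1) UNIV \<and>
        (\<forall>x1 x2. (f has_integral F x1 x2) ({..x1} \<times> {..x2})))"

definition is_bivariate_df_on_unit_sq :: "(real \<Rightarrow> real \<Rightarrow> real) \<Rightarrow> bool" where
  "is_bivariate_df_on_unit_sq G \<longleftrightarrow>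
     (\<exists>M :: (real \<times> real) measure. prob_space M \<and> sets M = sets borel \<and>
        (\<forall>t1 t2. 0 < t1 \<and> t1 < 1 \<and> 0 < t2 \<and> t2 < 1 \<longrightarrow>
            G t1 t2 = measure M ({..t1} \<times> {..t2})))"

definition F_theta :: "real \<Rightarrow> real \<Rightarrow> real \<Rightarrow> real" where
  "F_theta \<theta> t1 t2 = t1 powr (1 + \<theta> * ln t2) * t2"

definition cdcpe1 :: "(real \<Rightarrow> real \<Rightarrow> real) \<Rightarrow> real \<Rightarrow> real \<Rightarrow> real" where
  "cdcpe1 F t1 t2 = - integral {0..t1}
      (\<lambda>x1. (F x1 t2 / F t1 t2) * ln (F x1 t2 / F t1 t2))"

definition cdcpe2 :: "(real \<Rightarrow> real \<Rightarrow> real) \<Rightarrow> real \<Rightarrow> real \<Rightarrow> real" where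
  "cdcpe2 F t1 t2 = - integral {0..t2}
      (\<lambda>x2. (F t1 x2 / F t1 t2) * ln (F t1 x2 / F t1 t2))"

definition eit1 :: "(real \<Rightarrow> real \<Rightarrow> real) \<Rightarrow> real \<Rightarrow> real \<Rightarrow> real" where
  "eit1 F t1 t2 = integral {0..t1} (\<lambda>x1. F x1 t2) / F t1 t2"

definition eit2 :: "(real \<Rightarrow> real \<Rightarrow> real) \<Rightarrow> real \<Rightarrow> real \<Rightarrow> real" where
  "eit2 F t1 t2 = integral {0..t2} (\<lambda>x2. F t1 x2) / F t1 t2"

end

theory Submission
  imports Defs "HOL-Real_Asymp.Real_Asymp"
begin

(* Fix t2 and write G x = F x t2, A t = integral of G over [0, t] and B t = integral of G ln G
   over [0, t]. With c = a / (a + 1), a = 1 + theta ln t2, the identity CDCPE = c EIT for G reads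
   ln G t = c + B t / A t. The right-hand side is continuous, hence so is G, so A and B are C^1 and
   (B / A - c ln A)' = 0, i.e. G = E A^c. This separable equation A' = E A^c together with
   A (0+) = 0 forces A^(1 - c) = (1 - c) E t, hence G x = K x^a. Conversely, power functions satisfy
   the identity by a direct computation. So the identities for both i = 1, 2 say exactly that every
   section of F is a power function with the exponent of F_theta; then F / F_theta is constant on the
   open square, and the constant is 1 because F (s, s) tends to 1 as s tends to 1. *)

definition cum_past_entropy :: "(real \<Rightarrow> real) \<Rightarrow> real \<Rightarrow> real" where
  "cum_past_entropy G t = - integral {0..t} (\<lambda>x. G x / G t * ln (G x / G t))"

definition mean_inactivity_time :: "(real \<Rightarrow> real) \<Rightarrow> real \<Rightarrow> real" where
  "mean_inactivity_time G t = integral {0..t} G / G t"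

lemma has_integral_powr_mult_ln_ratio:
  fixes a t :: real
  assumes a: "a > -1" and t: "t > 0"
  shows "((\<lambda>x. x powr a * ln (x / t)) has_integral - (t powr (a + 1) / (a + 1)\<^sup>2)) {0..t}"
proof -
  define P where "P x = x powr (a + 1) * (ln (x / t) / (a + 1) - 1 / (a + 1)\<^sup>2)" for x
  have "continuous_on {0..t} P"
  proof -
    have "continuous (at x within {0..t}) P" if "x \<in> {0..t}" for x
    proof (cases "x = 0")
      case True
      have "(P \<longlongrightarrow> P 0) (at_right 0)"
        unfolding P_def using a t by simp real_asymp
      then show ?thesis
        using True t by (simp add: continuous_within at_within_Icc_at_right)
    next
      case False
      then have "isCont P x"
        using that t a unfolding P_def by (auto intro!: continuous_intros)
      then show ?thesis
        by (rule continuous_at_imp_continuous_within)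
    qed
    then show ?thesis
      by (simp add: continuous_on_eq_continuous_within)
  qed
  moreover have "(P has_real_derivative x powr a * ln (x / t)) (at x)" if "0 < x" for x
  proof -
    have "(P has_real_derivative (a + 1) * x powr a * (ln (x / t) / (a + 1) - 1 / (a + 1)\<^sup>2)
          + x powr (a + 1) * (1 / x / (a + 1))) (at x)"
      unfolding P_def using that t a by (auto intro!: derivative_eq_intros)
    moreover have "(a + 1) * x powr a * (ln (x / t) / (a + 1) - 1 / (a + 1)\<^sup>2)
        + x powr (a + 1) * (1 / x / (a + 1)) = x powr a * ln (x / t)"
    proof -
      have "b * y * (L / b - 1 / b\<^sup>2) + y / b = y * L" if "b \<noteq> 0" for b y L :: real
        using that by (simp add: field_simps power2_eq_square)
      moreover have "x powr (a + 1) * (1 / x / (a + 1)) = x powr a / (a + 1)"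
        using \<open>0 < x\<close> by (simp add: powr_add)
      ultimately show ?thesis
        using a by (simp add: mult.assoc)
    qed
    ultimately show ?thesis
      by (rule DERIV_cong)
  qed
  ultimately have "((\<lambda>x. x powr a * ln (x / t)) has_integral P t - P 0) {0..t}"
    using t by (intro fundamental_theorem_of_calculus_interior)
      (auto simp: has_real_derivative_iff_has_vector_derivative[symmetric])
  moreover have "P t - P 0 = - (t powr (a + 1) / (a + 1)\<^sup>2)"
    unfolding P_def using t by simp
  ultimately show ?thesis by simp
qed

lemma cum_past_entropy_powr:
  fixes G :: "real \<Rightarrow> real" and a t K :: real
  assumes a: "a > -1" and t: "t > 0" and K: "K \<noteq> 0"
    and G: "\<And>x. x \<in> {0..t} \<Longrightarrow> G x = K * x powr a"
  shows "cum_past_entropy G t = a / (a + 1) * mean_inactivity_time G t"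
proof -
  have Gt: "G t = K * t powr a"
    using G t by simp
  have "G x / G t * ln (G x / G t) = a / t powr a * (x powr a * ln (x / t))" if "x \<in> {0..t}" for x
  proof (cases "x = 0")
    case True
    then show ?thesis using G that by simp
  next
    case False
    then have "x > 0" using that by simp
    then have ratio: "G x / G t = x powr a / t powr a"
      using G that Gt K by simp
    have "ln (x powr a / t powr a) = a * ln (x / t)"
      using \<open>x > 0\<close> t by (simp add: ln_div ln_powr algebra_simps)
    then show ?thesis
      unfolding ratio by simp
  qed
  then have "integral {0..t} (\<lambda>x. G x / G t * ln (G x / G t))
      = integral {0..t} (\<lambda>x. a / t powr a * (x powr a * ln (x / t)))"
    by (rule integral_cong)
  also have "\<dots> = a / t powr a * - (t powr (a + 1) / (a + 1)\<^sup>2)"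
    by (intro integral_unique has_integral_mult_right has_integral_powr_mult_ln_ratio a t)
  finally have entropy: "cum_past_entropy G t = a * t / (a + 1)\<^sup>2"
    unfolding cum_past_entropy_def using t by (simp add: powr_add)
  have "integral {0..t} G = integral {0..t} (\<lambda>x. K * x powr a)"
    using G by (rule integral_cong)
  also have "\<dots> = K * (t powr (a + 1) / (a + 1))"
    using a t by (intro integral_unique has_integral_mult_right has_integral_powr_from_0) auto
  finally have "mean_inactivity_time G t = t / (a + 1)"
    unfolding mean_inactivity_time_def Gt using K t by (simp add: powr_add)
  with entropy show ?thesis
    by (simp add: power2_eq_square)
qed

lemma isCont_integral_upper:
  fixes f :: "real \<Rightarrow> real"
  assumes "f integrable_on {a..b}" "a < t" "t < b"
  shows "isCont (\<lambda>u. integral {a..u} f) t"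
  using indefinite_integral_continuous_1[OF assms(1)] assms(2,3)
  by (simp add: continuous_on_interior)

lemma has_real_derivative_integral_upper:
  fixes f :: "real \<Rightarrow> real"
  assumes f: "f integrable_on {a..b}" and t: "a < t" "t < b" and "isCont f t"
  shows "((\<lambda>u. integral {a..u} f) has_real_derivative f t) (at t)"
proof -
  have "((\<lambda>u. integral {a..u} f) has_vector_derivative f t) (at t within {a..b} - {})"
    using f t \<open>isCont f t\<close>
    by (intro integral_has_vector_derivative_continuous_at) (auto intro: continuous_at_imp_continuous_within)
  moreover have "at t within {a..b} = at t"
    using t by (intro at_within_interior) auto
  ultimately show ?thesis
    by (simp add: has_real_derivative_iff_has_vector_derivative)
qed

lemma integral_pos_of_mono:
  fixes G :: "real \<Rightarrow> real"
  assumes mono: "mono_on {a..b} G" and "0 \<le> G a" and s: "a \<le> s" "s < b" and "0 < G s"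
  shows "0 < integral {a..b} G"
proof -
  have int: "G integrable_on {a..b}"
    using mono by (rule integrable_on_mono_on)
  have "0 \<le> G x" if "x \<in> {a..b}" for x
    using mono_onD[OF mono, of a x] that \<open>0 \<le> G a\<close> by auto
  then have "0 \<le> integral {a..s} G"
    using s by (intro integral_nonneg integrable_on_subinterval[OF int]) auto
  moreover have "integral {s..b} (\<lambda>_. G s) \<le> integral {s..b} G"
    using s by (intro integral_le integrable_on_subinterval[OF int] mono_onD[OF mono]) auto
  then have "(b - s) * G s \<le> integral {s..b} G"
    using s by simp
  moreover have "integral {a..s} G + integral {s..b} G = integral {a..b} G"
    using s int by (intro Henstock_Kurzweil_Integration.integral_combine) auto
  ultimately show ?thesis
    using s \<open>0 < G s\<close> by (smt (verit) mult_pos_pos)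
qed

lemma powr_ode_zero_initial:
  fixes A :: "real \<Rightarrow> real" and b c E t :: real
  assumes c: "c < 1"
    and pos: "\<And>t. 0 < t \<Longrightarrow> t < b \<Longrightarrow> 0 < A t"
    and ode: "\<And>t. 0 < t \<Longrightarrow> t < b \<Longrightarrow> (A has_real_derivative E * A t powr c) (at t)"
    and init: "(A \<longlongrightarrow> 0) (at_right 0)"
    and t: "0 < t" "t < b"
  shows "A t powr (1 - c) = (1 - c) * E * t"
proof -
  define R where "R s = A s powr (1 - c) - (1 - c) * E * s" for s
  have "(R has_real_derivative 0) (at s)" if "0 < s" "s < b" for s
  proof -
    have "(R has_real_derivative (1 - c) * A s powr (1 - c - 1) * (E * A s powr c) - (1 - c) * E) (at s)"
      unfolding R_def using ode[OF that] pos[OF that]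
      by (auto intro!: derivative_eq_intros DERIV_fun_powr)
    moreover have "A s powr (1 - c - 1) * A s powr c = 1"
      using pos[OF that] by (simp add: powr_add[symmetric])
    ultimately show ?thesis
      by (simp add: algebra_simps)
  qed
  then obtain D where D: "\<And>s. s \<in> {0<..<b} \<Longrightarrow> R s = D"
    using has_field_derivative_zero_constant[of "{0<..<b}" R]
    by (force intro: has_field_derivative_at_within)
  have "((\<lambda>s. A s powr (1 - c)) \<longlongrightarrow> 0) (at_right 0)"
    using c t pos
    by (intro tendsto_zero_powrI[OF init tendsto_const] eventually_at_rightI[of 0 b])
      (auto simp: less_imp_le)
  then have "(R \<longlongrightarrow> 0 - (1 - c) * E * 0) (at_right 0)"
    unfolding R_def by (intro tendsto_intros)
  moreover have "(R \<longlongrightarrow> D) (at_right 0)"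
    using t D by (intro Lim_transform_eventually[OF tendsto_const] eventually_at_rightI[of 0 b]) auto
  ultimately have "D = 0"
    using tendsto_unique[OF trivial_limit_at_right_real] by force
  then show ?thesis
    using D[of t] t unfolding R_def by simp
qed

locale cdf_on_unit_interval =
  fixes G :: "real \<Rightarrow> real"
  assumes mono: "\<And>x y. 0 \<le> x \<Longrightarrow> x \<le> y \<Longrightarrow> G x \<le> G y"
    and G_0: "G 0 = 0"
    and G_pos: "\<And>x. 0 < x \<Longrightarrow> x < 1 \<Longrightarrow> 0 < G x"
    and entropy_integrable:
      "\<And>t. 0 < t \<Longrightarrow> t < 1 \<Longrightarrow> (\<lambda>x. G x / G t * ln (G x / G t)) integrable_on {0..t}"
begin

lemma G_nonneg: "0 \<le> x \<Longrightarrow> 0 \<le> G x"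
  using mono[of 0 x] G_0 by simp

lemma mono_on_G: "mono_on {0..t} G"
  by (intro mono_onI mono) auto

lemma G_integrable: "G integrable_on {0..t}"
  using mono_on_G by (rule integrable_on_mono_on)

lemma integral_G_pos:
  assumes "0 < t" "t < 1"
  shows "0 < integral {0..t} G"
  using assms G_pos[of "t / 2"] by (intro integral_pos_of_mono[OF mono_on_G]) (auto simp: G_0)

lemma G_ln_G_split:
  assumes "0 < t" "t < 1" "0 \<le> x"
  shows "G x * ln (G x) = G t * (G x / G t * ln (G x / G t)) + ln (G t) * G x"
proof (cases "G x = 0")
  case False
  then have "0 < G x"
    using G_nonneg[OF \<open>0 \<le> x\<close>] by simp
  with G_pos[OF assms(1,2)] show ?thesis
    by (simp add: ln_div field_simps)
qed simp

lemma G_ln_G_integrable: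
  assumes "0 < t" "t < 1"
  shows "(\<lambda>x. G x * ln (G x)) integrable_on {0..t}"
proof -
  have "(\<lambda>x. G t * (G x / G t * ln (G x / G t)) + ln (G t) * G x) integrable_on {0..t}"
    using entropy_integrable[OF assms] G_integrable by (intro integrable_add integrable_on_mult_right)
  then show ?thesis
    by (rule integrable_eq) (use G_ln_G_split[OF assms] in auto)
qed

lemma cum_past_entropy_eq:
  assumes "0 < t" "t < 1"
  shows "cum_past_entropy G t
    = (ln (G t) * integral {0..t} G - integral {0..t} (\<lambda>x. G x * ln (G x))) / G t"
proof -
  have "integral {0..t} (\<lambda>x. G x * ln (G x))
      = integral {0..t} (\<lambda>x. G t * (G x / G t * ln (G x / G t)) + ln (G t) * G x)"
    using G_ln_G_split[OF assms] by (intro integral_cong) auto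
  also have "\<dots> = G t * integral {0..t} (\<lambda>x. G x / G t * ln (G x / G t)) + ln (G t) * integral {0..t} G"
    using entropy_integrable[OF assms] G_integrable
    by (simp only: integral_add[OF integrable_on_mult_right integrable_on_mult_right] integral_mult_right)
  finally show ?thesis
    using G_pos[OF assms] unfolding cum_past_entropy_def by (simp add: field_simps)
qed

end

locale cum_past_entropy_proportional = cdf_on_unit_interval +
  fixes c :: real
  assumes c_less_1: "c < 1"
    and proportional: "\<And>t. 0 < t \<Longrightarrow> t < 1 \<Longrightarrow> cum_past_entropy G t = c * mean_inactivity_time G t"
begin

lemma ln_G_eq:
  assumes "0 < t" "t < 1"
  shows "ln (G t) = c + integral {0..t} (\<lambda>x. G x * ln (G x)) / integral {0..t} G"
  using proportional[OF assms] cum_past_entropy_eq[OF assms]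
    G_pos[OF assms] integral_G_pos[OF assms]
  unfolding mean_inactivity_time_def by (simp add: field_simps)

text \<open>No regularity of \<open>G\<close> is assumed: continuity comes from the identity above, whose
  right-hand side is a continuous function of \<open>t\<close>.\<close>
lemma isCont_G:
  assumes t: "0 < t" "t < 1"
  shows "isCont G t"
proof -
  let ?A = "\<lambda>t. integral {0..t} G" and ?B = "\<lambda>t. integral {0..t} (\<lambda>x. G x * ln (G x))"
  have "isCont ?A t" "isCont ?B t"
    using t G_integrable G_ln_G_integrable[of "(1 + t) / 2"]
    by (auto intro!: isCont_integral_upper[where b = "(1 + t) / 2"])
  then have "isCont (\<lambda>t. exp (c + ?B t / ?A t)) t"
    using integral_G_pos[OF t] by (auto intro!: continuous_intros)
  moreover have "\<forall>\<^sub>F s in nhds t. G s = exp (c + ?B s / ?A s)"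
    using t eventually_nhds_in_open[of "{0<..<1}" t]
    by (auto elim!: eventually_mono simp: ln_G_eq[symmetric] G_pos)
  ultimately show ?thesis
    by (simp add: isCont_cong)
qed

lemma has_real_derivative_integral_G:
  assumes "0 < t" "t < 1"
  shows "((\<lambda>t. integral {0..t} G) has_real_derivative G t) (at t)"
  using assms G_integrable isCont_G[OF assms]
  by (intro has_real_derivative_integral_upper[where b = 1]) auto

lemma has_real_derivative_integral_G_ln_G:
  assumes "0 < t" "t < 1"
  shows "((\<lambda>t. integral {0..t} (\<lambda>x. G x * ln (G x))) has_real_derivative G t * ln (G t)) (at t)"
  using assms G_ln_G_integrable[of "(1 + t) / 2"] isCont_G[OF assms] G_pos[OF assms]
  by (intro has_real_derivative_integral_upper[where b = "(1 + t) / 2"]) (auto intro!: continuous_intros)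

lemma G_eq_mult_powr_integral:
  obtains E where "0 < E" and "\<And>t. 0 < t \<Longrightarrow> t < 1 \<Longrightarrow> G t = E * integral {0..t} G powr c"
proof -
  let ?A = "\<lambda>t. integral {0..t} G" and ?B = "\<lambda>t. integral {0..t} (\<lambda>x. G x * ln (G x))"
  define Q where "Q t = ?B t / ?A t - c * ln (?A t)" for t
  have "(Q has_real_derivative 0) (at t)" if t: "0 < t" "t < 1" for t
  proof -
    have "(Q has_real_derivative
        (G t * ln (G t) * ?A t - ?B t * G t) / (?A t * ?A t) - c * (G t / ?A t)) (at t)"
      unfolding Q_def using has_real_derivative_integral_G[OF t] has_real_derivative_integral_G_ln_G[OF t]
        integral_G_pos[OF t]
      by (auto intro!: derivative_eq_intros simp: power2_eq_square)
    moreover have "(G t * ln (G t) * ?A t - ?B t * G t) / (?A t * ?A t) - c * (G t / ?A t)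
        = G t / ?A t * (ln (G t) - c - ?B t / ?A t)"
      using integral_G_pos[OF t] by (simp add: field_simps)
    ultimately show ?thesis
      using ln_G_eq[OF t] by simp
  qed
  then obtain k where k: "\<And>t. t \<in> {0<..<1} \<Longrightarrow> Q t = k"
    using has_field_derivative_zero_constant[of "{0<..<1}" Q]
    by (force intro: has_field_derivative_at_within)
  show ?thesis
  proof
    show "0 < exp (c + k)"
      by simp
    fix t :: real
    assume t: "0 < t" "t < 1"
    then have "ln (G t) = c + k + c * ln (?A t)"
      using ln_G_eq[OF t] k[of t] unfolding Q_def by simp
    then have "exp (ln (G t)) = exp (c + k) * exp (c * ln (?A t))"
      by (simp add: exp_add)
    then show "G t = exp (c + k) * ?A t powr c"
      using G_pos[OF t] integral_G_pos[OF t] by (simp add: powr_def)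
  qed
qed

lemma ex_G_eq_mult_powr: "\<exists>K. \<forall>x. 0 < x \<and> x < 1 \<longrightarrow> G x = K * x powr (c / (1 - c))"
proof -
  obtain E where E: "0 < E" and G_eq: "\<And>t. 0 < t \<Longrightarrow> t < 1 \<Longrightarrow> G t = E * integral {0..t} G powr c"
    using G_eq_mult_powr_integral by blast
  have "((\<lambda>t. integral {0..t} G) \<longlongrightarrow> integral {0..0} G) (at_right 0)"
    using indefinite_integral_continuous_1[OF G_integrable[of 1]]
    by (intro continuous_on_Icc_at_rightD) auto
  then have "integral {0..t} G powr (1 - c) = (1 - c) * E * t" if "0 < t" "t < 1" for t
    using that c_less_1 integral_G_pos
    by (intro powr_ode_zero_initial[where b = 1]) (auto simp: G_eq[symmetric] has_real_derivative_integral_G)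
  moreover have "A powr c = (A powr (1 - c)) powr (c / (1 - c))" for A :: real
    using c_less_1 by (simp add: powr_powr)
  ultimately have "G x = E * ((1 - c) * E * x) powr (c / (1 - c))" if "0 < x" "x < 1" for x
    using G_eq that by simp
  then show ?thesis
    using c_less_1 E by (auto simp: powr_mult)
qed

end

theorem (in cdf_on_unit_interval) cum_past_entropy_proportional_iff_powr:
  fixes a :: real
  assumes a: "0 < a"
  shows "(\<forall>t. 0 < t \<and> t < 1 \<longrightarrow> cum_past_entropy G t = a / (a + 1) * mean_inactivity_time G t)
    \<longleftrightarrow> (\<exists>K. \<forall>x. 0 < x \<and> x < 1 \<longrightarrow> G x = K * x powr a)"
proof
  assume "\<forall>t. 0 < t \<and> t < 1 \<longrightarrow> cum_past_entropy G t = a / (a + 1) * mean_inactivity_time G t"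
  then interpret cum_past_entropy_proportional G "a / (a + 1)"
    using a by unfold_locales auto
  have "a / (a + 1) / (1 - a / (a + 1)) = a"
    using a by (simp add: field_simps)
  then show "\<exists>K. \<forall>x. 0 < x \<and> x < 1 \<longrightarrow> G x = K * x powr a"
    using ex_G_eq_mult_powr by simp
next
  assume "\<exists>K. \<forall>x. 0 < x \<and> x < 1 \<longrightarrow> G x = K * x powr a"
  then obtain K where K: "\<And>x. 0 < x \<Longrightarrow> x < 1 \<Longrightarrow> G x = K * x powr a"
    by blast
  have "K \<noteq> 0"
    using K[of "1 / 2"] G_pos[of "1 / 2"] by auto
  have "G x = K * x powr a" if "0 \<le> x" "x < 1" for x
    using K that G_0 by (cases "x = 0") auto
  then show "\<forall>t. 0 < t \<and> t < 1 \<longrightarrow> cum_past_entropy G t = a / (a + 1) * mean_inactivity_time G t"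
    using a \<open>K \<noteq> 0\<close> by (intro allI impI cum_past_entropy_powr) auto
qed

lemma F_theta_commute:
  assumes "0 < t1" "0 < t2"
  shows "F_theta \<theta> t1 t2 = F_theta \<theta> t2 t1"
  using assms by (simp add: F_theta_def powr_def exp_add algebra_simps)

lemma abs_cont_df_unit_sq_mono:
  assumes "abs_cont_df_unit_sq F" "x \<le> x'" "y \<le> y'"
  shows "F x y \<le> F x' y'"
proof -
  obtain f where "\<And>z. 0 \<le> f z" and F: "\<And>x y. (f has_integral F x y) ({..x} \<times> {..y})"
    using assms(1) unfolding abs_cont_df_unit_sq_def by blast
  then show ?thesis
    using assms(2,3) by (intro has_integral_subset_le[OF _ F F]) auto
qed

lemma abs_cont_df_unit_sq_eq_0:
  assumes "abs_cont_df_unit_sq F" "x \<le> 0 \<or> y \<le> 0"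
  shows "F x y = 0"
proof -
  obtain f where supp: "\<And>z. z \<notin> {0<..<1} \<times> {0<..<1} \<Longrightarrow> f z = 0"
    and F: "(f has_integral F x y) ({..x} \<times> {..y})"
    using assms(1) unfolding abs_cont_df_unit_sq_def by blast
  have "(f has_integral 0) ({..x} \<times> {..y})"
    using assms(2) supp by (intro has_integral_is_0) force
  with F show ?thesis
    using has_integral_unique by blast
qed

lemma abs_cont_df_unit_sq_diag_tendsto_1:
  fixes s :: "nat \<Rightarrow> real"
  assumes "abs_cont_df_unit_sq F" and s: "incseq s" "s \<longlonglongrightarrow> 1"
  shows "(\<lambda>k. F (s k) (s k)) \<longlonglongrightarrow> 1"
proof -
  obtain f where f_nonneg: "\<And>z. 0 \<le> f z"
    and supp: "\<And>z. z \<notin> {0<..<1} \<times> {0<..<1} \<Longrightarrow> f z = 0"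
    and f_int: "(f has_integral 1) UNIV"
    and F: "\<And>x y. (f has_integral F x y) ({..x} \<times> {..y})"
    using assms(1) unfolding abs_cont_df_unit_sq_def by blast
  define g where "g k z = (if z \<in> {..s k} \<times> {..s k} then f z else 0)" for k z
  have g_int: "(g k has_integral F (s k) (s k)) UNIV" for k
    unfolding g_def using F by (simp add: has_integral_restrict_UNIV)
  have "F (s k) (s k) \<le> 1" for k
    using f_nonneg by (intro has_integral_subset_le[OF _ F f_int]) auto
  moreover have "0 \<le> F (s k) (s k)" for k
    using f_nonneg by (intro has_integral_nonneg[OF F]) auto
  ultimately have "bounded (range (\<lambda>k. integral UNIV (g k)))"
    using g_int[THEN integral_unique] by (auto simp: bounded_real intro!: exI[of _ 1])
  moreover have "(\<lambda>k. g k z) \<longlonglongrightarrow> f z" for z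
  proof (cases "z \<in> {0<..<1} \<times> {0<..<1}")
    case True
    then have "\<forall>\<^sub>F k in sequentially. max (fst z) (snd z) < s k"
      using s(2) by (intro order_tendstoD(1)) auto
    then have "\<forall>\<^sub>F k in sequentially. g k z = f z"
      by eventually_elim (auto simp: g_def mem_Times_iff)
    then show ?thesis
      by (rule tendsto_eventually)
  next
    case False
    then have "f z = 0"
      by (rule supp)
    moreover have "g k z = 0" for k
      using \<open>f z = 0\<close> by (simp add: g_def)
    ultimately show ?thesis
      by simp
  qed
  moreover have "g k z \<le> g (Suc k) z" for k z
    using incseqD[OF s(1), of k "Suc k"] f_nonneg[of z] by (auto simp: g_def mem_Times_iff)
  moreover have "g k integrable_on UNIV" for k
    using g_int by blast
  ultimately have "(\<lambda>k. integral UNIV (g k)) \<longlonglongrightarrow> integral UNIV f"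
    by (intro monotone_convergence_increasing[THEN conjunct2])
  then show ?thesis
    using g_int[THEN integral_unique] f_int[THEN integral_unique] by simp
qed

lemma eq_mult_F_theta_of_power_sections:
  fixes F :: "real \<Rightarrow> real \<Rightarrow> real" and \<theta> :: real
  assumes sec1: "\<And>t2. 0 < t2 \<Longrightarrow> t2 < 1 \<Longrightarrow> \<exists>K. \<forall>x. 0 < x \<and> x < 1 \<longrightarrow> F x t2 = K * x powr (1 + \<theta> * ln t2)"
    and sec2: "\<And>t1. 0 < t1 \<Longrightarrow> t1 < 1 \<Longrightarrow> \<exists>K. \<forall>y. 0 < y \<and> y < 1 \<longrightarrow> F t1 y = K * y powr (1 + \<theta> * ln t1)"
  obtains C where "\<And>t1 t2. 0 < t1 \<Longrightarrow> t1 < 1 \<Longrightarrow> 0 < t2 \<Longrightarrow> t2 < 1 \<Longrightarrow> F t1 t2 = C * F_theta \<theta> t1 t2"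
proof -
  define r where "r t1 t2 = F t1 t2 / F_theta \<theta> t1 t2" for t1 t2
  have r1: "r x t2 = r (1 / 2) t2" if "0 < x" "x < 1" "0 < t2" "t2 < 1" for x t2
  proof -
    obtain K where "\<forall>x. 0 < x \<and> x < 1 \<longrightarrow> F x t2 = K * x powr (1 + \<theta> * ln t2)"
      using sec1 \<open>0 < t2\<close> \<open>t2 < 1\<close> by blast
    then have "r z t2 = K / t2" if "0 < z" "z < 1" for z
      using that \<open>0 < t2\<close> by (simp add: r_def F_theta_def)
    with that show ?thesis
      by simp
  qed
  have r2: "r t1 y = r t1 (1 / 2)" if "0 < y" "y < 1" "0 < t1" "t1 < 1" for y t1
  proof -
    obtain K where "\<forall>y. 0 < y \<and> y < 1 \<longrightarrow> F t1 y = K * y powr (1 + \<theta> * ln t1)"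
      using sec2 \<open>0 < t1\<close> \<open>t1 < 1\<close> by blast
    then have "r t1 z = K / t1" if "0 < z" "z < 1" for z
      using that \<open>0 < t1\<close> F_theta_commute[of t1 z \<theta>] by (simp add: r_def F_theta_def)
    with that show ?thesis
      by simp
  qed
  show ?thesis
  proof
    fix t1 t2 :: real
    assume t: "0 < t1" "t1 < 1" "0 < t2" "t2 < 1"
    then have "r t1 t2 = r (1 / 2) (1 / 2)"
      using r1[of t1 t2] r2[of t2 "1 / 2"] by simp
    moreover have "0 < F_theta \<theta> t1 t2"
      using t by (simp add: F_theta_def)
    ultimately show "F t1 t2 = r (1 / 2) (1 / 2) * F_theta \<theta> t1 t2"
      by (simp add: r_def field_simps)
  qed
qed

lemma abs_cont_df_unit_sq_mult_F_theta_imp_eq: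
  assumes "abs_cont_df_unit_sq F"
    and C: "\<And>t1 t2. 0 < t1 \<Longrightarrow> t1 < 1 \<Longrightarrow> 0 < t2 \<Longrightarrow> t2 < 1 \<Longrightarrow> F t1 t2 = C * F_theta \<theta> t1 t2"
  shows "C = 1"
proof -
  define s :: "nat \<Rightarrow> real" where "s k = 1 - 1 / (real k + 2)" for k
  have s_in: "0 < s k" "s k < 1" for k
    by (simp_all add: s_def field_simps)
  have "incseq s"
    by (rule incseq_SucI) (simp add: s_def field_simps)
  moreover have "s \<longlonglongrightarrow> 1"
    unfolding s_def by real_asymp
  ultimately have "(\<lambda>k. F (s k) (s k)) \<longlonglongrightarrow> 1"
    using assms(1) by (rule abs_cont_df_unit_sq_diag_tendsto_1[rotated])
  moreover have "(\<lambda>k. C * (s k powr (1 + \<theta> * ln (s k)) * s k)) \<longlonglongrightarrow> C * (1 powr (1 + \<theta> * ln 1) * 1)"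
    using \<open>s \<longlonglongrightarrow> 1\<close> by (intro tendsto_intros) auto
  then have "(\<lambda>k. F (s k) (s k)) \<longlonglongrightarrow> C"
    using C s_in by (simp add: F_theta_def)
  ultimately show ?thesis
    using LIMSEQ_unique by blast
qed

lemma abs_cont_df_unit_sq_eq_F_theta_iff_power_sections:
  assumes "abs_cont_df_unit_sq F"
  shows "(\<forall>t1 t2. 0 < t1 \<and> t1 < 1 \<and> 0 < t2 \<and> t2 < 1 \<longrightarrow> F t1 t2 = F_theta \<theta> t1 t2)
    \<longleftrightarrow> (\<forall>t2. 0 < t2 \<and> t2 < 1 \<longrightarrow> (\<exists>K. \<forall>x. 0 < x \<and> x < 1 \<longrightarrow> F x t2 = K * x powr (1 + \<theta> * ln t2)))
      \<and> (\<forall>t1. 0 < t1 \<and> t1 < 1 \<longrightarrow> (\<exists>K. \<forall>y. 0 < y \<and> y < 1 \<longrightarrow> F t1 y = K * y powr (1 + \<theta> * ln t1)))"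
proof
  assume F: "\<forall>t1 t2. 0 < t1 \<and> t1 < 1 \<and> 0 < t2 \<and> t2 < 1 \<longrightarrow> F t1 t2 = F_theta \<theta> t1 t2"
  have "F x t = F_theta \<theta> x t" "F t x = F_theta \<theta> x t"
    if "0 < x" "x < 1" "0 < t" "t < 1" for x t
    using F that F_theta_commute[of t x \<theta>] by simp_all
  then have "F x t = t * x powr (1 + \<theta> * ln t)" "F t x = t * x powr (1 + \<theta> * ln t)"
    if "0 < x" "x < 1" "0 < t" "t < 1" for x t
    using that by (simp_all add: F_theta_def mult.commute)
  then show "(\<forall>t2. 0 < t2 \<and> t2 < 1 \<longrightarrow> (\<exists>K. \<forall>x. 0 < x \<and> x < 1 \<longrightarrow> F x t2 = K * x powr (1 + \<theta> * ln t2)))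
      \<and> (\<forall>t1. 0 < t1 \<and> t1 < 1 \<longrightarrow> (\<exists>K. \<forall>y. 0 < y \<and> y < 1 \<longrightarrow> F t1 y = K * y powr (1 + \<theta> * ln t1)))"
    by blast
next
  assume "(\<forall>t2. 0 < t2 \<and> t2 < 1 \<longrightarrow> (\<exists>K. \<forall>x. 0 < x \<and> x < 1 \<longrightarrow> F x t2 = K * x powr (1 + \<theta> * ln t2)))
      \<and> (\<forall>t1. 0 < t1 \<and> t1 < 1 \<longrightarrow> (\<exists>K. \<forall>y. 0 < y \<and> y < 1 \<longrightarrow> F t1 y = K * y powr (1 + \<theta> * ln t1)))"
  then obtain C where C: "\<And>t1 t2. 0 < t1 \<Longrightarrow> t1 < 1 \<Longrightarrow> 0 < t2 \<Longrightarrow> t2 < 1 \<Longrightarrow> F t1 t2 = C * F_theta \<theta> t1 t2"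
    using eq_mult_F_theta_of_power_sections[of F \<theta>] by blast
  with assms have "C = 1"
    by (rule abs_cont_df_unit_sq_mult_F_theta_imp_eq)
  with C show "\<forall>t1 t2. 0 < t1 \<and> t1 < 1 \<and> 0 < t2 \<and> t2 < 1 \<longrightarrow> F t1 t2 = F_theta \<theta> t1 t2"
    by simp
qed

lemma cdcpe1_eq: "cdcpe1 F t1 t2 = cum_past_entropy (\<lambda>x. F x t2) t1"
  by (simp add: cdcpe1_def cum_past_entropy_def)

lemma cdcpe2_eq: "cdcpe2 F t1 t2 = cum_past_entropy (\<lambda>y. F t1 y) t2"
  by (simp add: cdcpe2_def cum_past_entropy_def)

lemma eit1_eq: "eit1 F t1 t2 = mean_inactivity_time (\<lambda>x. F x t2) t1"
  by (simp add: eit1_def mean_inactivity_time_def)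

lemma eit2_eq: "eit2 F t1 t2 = mean_inactivity_time (\<lambda>y. F t1 y) t2"
  by (simp add: eit2_def mean_inactivity_time_def)

lemma cdf_on_unit_interval_sections:
  assumes "abs_cont_df_unit_sq F"
    and "\<forall>t1 t2. 0 < t1 \<and> t1 < 1 \<and> 0 < t2 \<and> t2 < 1 \<longrightarrow> F t1 t2 > 0"
    and "\<forall>t1 t2. 0 < t1 \<and> t1 < 1 \<and> 0 < t2 \<and> t2 < 1 \<longrightarrow>
           (\<lambda>x1. (F x1 t2 / F t1 t2) * ln (F x1 t2 / F t1 t2)) integrable_on {0..t1} \<and>
           (\<lambda>x2. (F t1 x2 / F t1 t2) * ln (F t1 x2 / F t1 t2)) integrable_on {0..t2}"
    and "0 < t \<and> t < 1"
  shows "cdf_on_unit_interval (\<lambda>x. F x t)" and "cdf_on_unit_interval (\<lambda>y. F t y)"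
  using assms by (unfold_locales; auto intro: abs_cont_df_unit_sq_mono abs_cont_df_unit_sq_eq_0)+

theorem mainTheorem15:
  fixes \<theta> :: real and F :: "real \<Rightarrow> real \<Rightarrow> real"
  assumes "\<theta> \<le> 0"
    and "is_bivariate_df_on_unit_sq (F_theta \<theta>)"
    and "abs_cont_df_unit_sq F"
    and "\<forall>t1 t2. 0 < t1 \<and> t1 < 1 \<and> 0 < t2 \<and> t2 < 1 \<longrightarrow> F t1 t2 > 0"
    and "\<forall>t1 t2. 0 < t1 \<and> t1 < 1 \<and> 0 < t2 \<and> t2 < 1 \<longrightarrow>
           (\<lambda>x1. (F x1 t2 / F t1 t2) * ln (F x1 t2 / F t1 t2)) integrable_on {0..t1} \<and>
           (\<lambda>x2. (F t1 x2 / F t1 t2) * ln (F t1 x2 / F t1 t2)) integrable_on {0..t2}"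
  shows "(\<forall>t1 t2. 0 < t1 \<and> t1 < 1 \<and> 0 < t2 \<and> t2 < 1 \<longrightarrow>
            cdcpe1 F t1 t2 = ((1 + \<theta> * ln t2) / (2 + \<theta> * ln t2)) * eit1 F t1 t2 \<and>
            cdcpe2 F t1 t2 = ((1 + \<theta> * ln t1) / (2 + \<theta> * ln t1)) * eit2 F t1 t2)
         \<longleftrightarrow> (\<forall>t1 t2. 0 < t1 \<and> t1 < 1 \<and> 0 < t2 \<and> t2 < 1 \<longrightarrow> F t1 t2 = F_theta \<theta> t1 t2)"
proof -
  have exponent_pos: "0 < 1 + \<theta> * ln t" if "0 < t" "t < 1" for t
    using assms(1) that by (smt (verit) ln_less_zero mult_nonpos_nonpos)
  have ratio: "(1 + \<theta> * ln t) / (2 + \<theta> * ln t) = (1 + \<theta> * ln t) / (1 + \<theta> * ln t + 1)" for t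
    by simp
  have sections1: "(\<forall>t2. 0 < t2 \<and> t2 < 1 \<longrightarrow> (\<forall>t1. 0 < t1 \<and> t1 < 1 \<longrightarrow>
        cdcpe1 F t1 t2 = ((1 + \<theta> * ln t2) / (2 + \<theta> * ln t2)) * eit1 F t1 t2))
      \<longleftrightarrow> (\<forall>t2. 0 < t2 \<and> t2 < 1 \<longrightarrow>
        (\<exists>K. \<forall>x. 0 < x \<and> x < 1 \<longrightarrow> F x t2 = K * x powr (1 + \<theta> * ln t2)))"
    unfolding cdcpe1_eq eit1_eq ratio using assms(3-5) exponent_pos
    by (intro all_cong cdf_on_unit_interval.cum_past_entropy_proportional_iff_powr
        cdf_on_unit_interval_sections(1)) auto
  have sections2: "(\<forall>t1. 0 < t1 \<and> t1 < 1 \<longrightarrow> (\<forall>t2. 0 < t2 \<and> t2 < 1 \<longrightarrow>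
        cdcpe2 F t1 t2 = ((1 + \<theta> * ln t1) / (2 + \<theta> * ln t1)) * eit2 F t1 t2))
      \<longleftrightarrow> (\<forall>t1. 0 < t1 \<and> t1 < 1 \<longrightarrow>
        (\<exists>K. \<forall>y. 0 < y \<and> y < 1 \<longrightarrow> F t1 y = K * y powr (1 + \<theta> * ln t1)))"
    unfolding cdcpe2_eq eit2_eq ratio using assms(3-5) exponent_pos
    by (intro all_cong cdf_on_unit_interval.cum_past_entropy_proportional_iff_powr
        cdf_on_unit_interval_sections(2)) auto
  show ?thesis
    unfolding abs_cont_df_unit_sq_eq_F_theta_iff_power_sections[OF assms(3)]
      sections1[symmetric] sections2[symmetric]
    by auto
qed

end
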